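(* Let $\varphi$ be an optimal (expected-revenue-maximizing) mixed signaling scheme and let $S$ be a signal of $\varphi$ that is not singleton-splittable, i.e. $\mathrm{rev}(S)>\sum_{j\in S}\varphi_{j,S}\,\mathrm{rev}(j)$. Then both $w_1(S)$ and $w_2(S)$ belong to the set $\{w_1(j): j\in S\}$.
   Context: Setting: $n\ge 2$ bidders, $m$ item types with probabilities $p_j$, nonnegative valuations $v_{i,j}$; $\psi_{i,j}=p_jv_{i,j}$. A mixed signaling scheme is a finite signal set $\mathcal{S}$ and $\varphi:[m]\times\mathcal{S}\to[0,1]$ with $\sum_S\varphi(j,S)=1$ for each $j$; $\varphi_{j,S}=\varphi(j,S)$; a signal is identified with its support $\{j:\varphi_{j,S}>0\}$, so $j\in S$ means $\varphi_{j,S}>0$. Its expected revenue is $\sum_S\mathrm{max2}_i\{\sum_j\psi_{i,j}\varphi_{j,S}\}$ ($\mathrm{max2}$ = second-largest entry with multiplicity). Ties are broken by a fixed priority order on bidders. $w_1(S)$ is the bidder maximizing $\sum_j\psi_{i,j}\varphi_{j,S}$ and $w_2(S)$ the maximizer among $i\ne w_1(S)$; $\mathrm{rev}(S)=\sum_j\varphi_{j,S}\psi_{w_2(S),j}$. For a single type $j$, $w_1(j)$ is the bidder maximizing $\psi_{i,j}$, $w_2(j)$ the maximizer among the others, and $\mathrm{rev}(j)=\psi_{w_2(j),j}=\mathrm{max2}_i\psi_{i,j}$. *)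

theory Defs
  imports Complex_Main
begin

(* Bidders are 0..<n, item types are 0..<m, signals are labels of type nat.
   prio :: nat => nat is the fixed priority order on bidders (injective on bidders);
   a smaller prio value means higher priority in tie-breaking. *)

definition psi :: "(nat \<Rightarrow> real) \<Rightarrow> (nat \<Rightarrow> nat \<Rightarrow> real) \<Rightarrow> nat \<Rightarrow> nat \<Rightarrow> real" where
  "psi p v i j = p j * v i j"

definition top :: "(nat \<Rightarrow> nat) \<Rightarrow> (nat \<Rightarrow> real) \<Rightarrow> nat set \<Rightarrow> nat" where
  "top prio f A = (THE i. i \<in> A \<and> (\<forall>k\<in>A - {i}. f k < f i \<or> (f k = f i \<and> prio i < prio k)))"

definition sigval :: "nat \<Rightarrow> (nat \<Rightarrow> real) \<Rightarrow> (nat \<Rightarrow> nat \<Rightarrow> real) \<Rightarrow> (nat \<Rightarrow> nat \<Rightarrow> real) \<Rightarrow> nat \<Rightarrow> nat \<Rightarrow> real" where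
  "sigval m p v \<phi> s i = (\<Sum>j<m. psi p v i j * \<phi> j s)"

definition w1 :: "nat \<Rightarrow> nat \<Rightarrow> (nat \<Rightarrow> nat) \<Rightarrow> (nat \<Rightarrow> real) \<Rightarrow> (nat \<Rightarrow> nat \<Rightarrow> real) \<Rightarrow> (nat \<Rightarrow> nat \<Rightarrow> real) \<Rightarrow> nat \<Rightarrow> nat" where
  "w1 n m prio p v \<phi> s = top prio (sigval m p v \<phi> s) {..<n}"

definition w2 :: "nat \<Rightarrow> nat \<Rightarrow> (nat \<Rightarrow> nat) \<Rightarrow> (nat \<Rightarrow> real) \<Rightarrow> (nat \<Rightarrow> nat \<Rightarrow> real) \<Rightarrow> (nat \<Rightarrow> nat \<Rightarrow> real) \<Rightarrow> nat \<Rightarrow> nat" where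
  "w2 n m prio p v \<phi> s = top prio (sigval m p v \<phi> s) ({..<n} - {w1 n m prio p v \<phi> s})"

(* rev(S) = sum_j phi_{j,S} psi_{w2(S),j}  (= max2 of the bidders' values) *)
definition rev_sig :: "nat \<Rightarrow> nat \<Rightarrow> (nat \<Rightarrow> nat) \<Rightarrow> (nat \<Rightarrow> real) \<Rightarrow> (nat \<Rightarrow> nat \<Rightarrow> real) \<Rightarrow> (nat \<Rightarrow> nat \<Rightarrow> real) \<Rightarrow> nat \<Rightarrow> real" where
  "rev_sig n m prio p v \<phi> s = (\<Sum>j<m. \<phi> j s * psi p v (w2 n m prio p v \<phi> s) j)"

definition w1_item :: "nat \<Rightarrow> (nat \<Rightarrow> nat) \<Rightarrow> (nat \<Rightarrow> real) \<Rightarrow> (nat \<Rightarrow> nat \<Rightarrow> real) \<Rightarrow> nat \<Rightarrow> nat" where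
  "w1_item n prio p v j = top prio (\<lambda>i. psi p v i j) {..<n}"

definition w2_item :: "nat \<Rightarrow> (nat \<Rightarrow> nat) \<Rightarrow> (nat \<Rightarrow> real) \<Rightarrow> (nat \<Rightarrow> nat \<Rightarrow> real) \<Rightarrow> nat \<Rightarrow> nat" where
  "w2_item n prio p v j = top prio (\<lambda>i. psi p v i j) ({..<n} - {w1_item n prio p v j})"

definition rev_item :: "nat \<Rightarrow> (nat \<Rightarrow> nat) \<Rightarrow> (nat \<Rightarrow> real) \<Rightarrow> (nat \<Rightarrow> nat \<Rightarrow> real) \<Rightarrow> nat \<Rightarrow> real" where
  "rev_item n prio p v j = psi p v (w2_item n prio p v j) j"

definition scheme :: "nat \<Rightarrow> nat set \<Rightarrow> (nat \<Rightarrow> nat \<Rightarrow> real) \<Rightarrow> bool" where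
  "scheme m Sig \<phi> \<longleftrightarrow> finite Sig \<and>
     (\<forall>j<m. \<forall>s\<in>Sig. 0 \<le> \<phi> j s \<and> \<phi> j s \<le> 1) \<and>
     (\<forall>j<m. (\<Sum>s\<in>Sig. \<phi> j s) = 1)"

definition supp :: "nat \<Rightarrow> (nat \<Rightarrow> nat \<Rightarrow> real) \<Rightarrow> nat \<Rightarrow> nat set" where
  "supp m \<phi> s = {j. j < m \<and> \<phi> j s > 0}"

definition revenue :: "nat \<Rightarrow> nat \<Rightarrow> (nat \<Rightarrow> nat) \<Rightarrow> (nat \<Rightarrow> real) \<Rightarrow> (nat \<Rightarrow> nat \<Rightarrow> real) \<Rightarrow> nat set \<Rightarrow> (nat \<Rightarrow> nat \<Rightarrow> real) \<Rightarrow> real" where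
  "revenue n m prio p v Sig \<phi> = (\<Sum>s\<in>Sig. sigval m p v \<phi> s (w2 n m prio p v \<phi> s))"

definition optimal :: "nat \<Rightarrow> nat \<Rightarrow> (nat \<Rightarrow> nat) \<Rightarrow> (nat \<Rightarrow> real) \<Rightarrow> (nat \<Rightarrow> nat \<Rightarrow> real) \<Rightarrow> nat set \<Rightarrow> (nat \<Rightarrow> nat \<Rightarrow> real) \<Rightarrow> bool" where
  "optimal n m prio p v Sig \<phi> \<longleftrightarrow> scheme m Sig \<phi> \<and>
     (\<forall>Sig' \<phi>'. scheme m Sig' \<phi>' \<longrightarrow> revenue n m prio p v Sig' \<phi>' \<le> revenue n m prio p v Sig \<phi>)"

end

theory Submission
  imports Defs
begin

text \<open>A bidder who is not the top bidder for any item type in the support of a signal bids, for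
  each such type, at most the second-highest value, hence at most the revenue of splitting the
  signal into singletons. So if a signal beats that bound, both its top and its second-highest
  bidder must be top bidders of some type in its support. Optimality is only needed for the
  nonnegativity of the scheme.\<close>

lemma top_exists:
  fixes f :: "nat \<Rightarrow> real" and prio :: "nat \<Rightarrow> nat"
  assumes "finite A" "A \<noteq> {}" "inj_on prio A"
  shows "\<exists>i. i \<in> A \<and> (\<forall>k\<in>A - {i}. f k < f i \<or> (f k = f i \<and> prio i < prio k))"
proof -
  define B where "B = {i\<in>A. f i = Max (f ` A)}"
  have "Max (f ` A) \<in> f ` A" using assms(1,2) by simp
  then have "finite B" "B \<noteq> {}" using assms(1) by (auto simp: B_def)
  then have "Min (prio ` B) \<in> prio ` B" by simp
  then obtain i where "i \<in> B" and i_min: "prio i = Min (prio ` B)" by auto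
  have "f k < f i \<or> (f k = f i \<and> prio i < prio k)" if k: "k \<in> A - {i}" for k
  proof (cases "k \<in> B")
    case True
    then have "prio i \<le> prio k" using i_min \<open>finite B\<close> by simp
    moreover have "prio i \<noteq> prio k"
      using assms(3) k \<open>i \<in> B\<close> by (auto simp: B_def inj_on_def)
    ultimately show ?thesis using True \<open>i \<in> B\<close> by (simp add: B_def)
  next
    case False
    moreover have "f k \<le> Max (f ` A)" using assms(1) k by simp
    ultimately show ?thesis using k \<open>i \<in> B\<close> by (auto simp: B_def)
  qed
  with \<open>i \<in> B\<close> show ?thesis unfolding B_def by blast
qed

lemma top_in_and_max:
  fixes f :: "nat \<Rightarrow> real" and prio :: "nat \<Rightarrow> nat"
  assumes "finite A" "A \<noteq> {}" "inj_on prio A"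
  shows "top prio f A \<in> A" and "\<And>k. k \<in> A \<Longrightarrow> f k \<le> f (top prio f A)"
proof -
  let ?P = "\<lambda>i. i \<in> A \<and> (\<forall>k\<in>A - {i}. f k < f i \<or> (f k = f i \<and> prio i < prio k))"
  obtain i where i: "?P i" using top_exists[OF assms, where f = f] by blast
  have unique: "j = i" if j: "?P j" for j
  proof (rule ccontr)
    assume "j \<noteq> i"
    then have "f i < f j \<or> (f i = f j \<and> prio j < prio i)"
      and "f j < f i \<or> (f j = f i \<and> prio i < prio j)" using i j by auto
    then show False by linarith
  qed
  have top: "top prio f A = i" unfolding top_def by (rule the_equality[where P = ?P, OF i unique])
  show "top prio f A \<in> A" using i by (simp add: top)
  show "f k \<le> f (top prio f A)" if "k \<in> A" for k
  proof (cases "k = i")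
    case False
    with i that have "f k < f i \<or> (f k = f i \<and> prio i < prio k)" by blast
    then show ?thesis unfolding top by linarith
  qed (simp add: top)
qed

lemma top_second_max:
  fixes f :: "nat \<Rightarrow> real" and prio :: "nat \<Rightarrow> nat"
  assumes "finite A" "card A \<ge> 2" "inj_on prio A"
  defines "t \<equiv> top prio f (A - {top prio f A})"
  shows "t \<in> A" and "\<And>k. k \<in> A \<Longrightarrow> k \<noteq> top prio f A \<Longrightarrow> f k \<le> f t"
proof -
  have "A \<noteq> {}" using assms(2) by auto
  then have "top prio f A \<in> A" by (rule top_in_and_max(1)[OF assms(1) _ assms(3)])
  then have "card (A - {top prio f A}) \<noteq> 0" using assms(2) by simp
  then have ne: "A - {top prio f A} \<noteq> {}" by (metis card.empty)
  have inj: "inj_on prio (A - {top prio f A})" using assms(3) by (rule inj_on_subset) blast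
  have fin: "finite (A - {top prio f A})" using assms(1) by simp
  note top2 = top_in_and_max[OF fin ne inj, where f = f, folded t_def]
  show "t \<in> A" using top2(1) by blast
  show "\<And>k. k \<in> A \<Longrightarrow> k \<noteq> top prio f A \<Longrightarrow> f k \<le> f t" using top2(2) by blast
qed

lemma sigval_eq_sum_supp:
  assumes "\<And>j. j < m \<Longrightarrow> 0 \<le> \<phi> j s"
  shows "sigval m p v \<phi> s i = (\<Sum>j\<in>supp m \<phi> s. \<phi> j s * psi p v i j)"
  unfolding sigval_def
proof (rule sum.mono_neutral_cong_right)
  show "\<forall>j\<in>{..<m} - supp m \<phi> s. psi p v i j * \<phi> j s = 0"
    using assms by (force simp: supp_def)
qed (auto simp: supp_def)

lemma psi_le_rev_item:
  assumes "n \<ge> 2" "inj_on prio {..<n}" "b < n" "b \<noteq> w1_item n prio p v j"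
  shows "psi p v b j \<le> rev_item n prio p v j"
  using top_second_max(2)[where A = "{..<n}" and f = "\<lambda>i. psi p v i j" and prio = prio and k = b]
    assms
  unfolding rev_item_def w2_item_def w1_item_def by simp

lemma sigval_le_singleton_revenue:
  assumes "n \<ge> 2" "inj_on prio {..<n}"
    and "\<And>j. j < m \<Longrightarrow> 0 \<le> \<phi> j s"
    and "b < n" "b \<notin> w1_item n prio p v ` supp m \<phi> s"
  shows "sigval m p v \<phi> s b \<le> (\<Sum>j\<in>supp m \<phi> s. \<phi> j s * rev_item n prio p v j)"
proof -
  have "sigval m p v \<phi> s b = (\<Sum>j\<in>supp m \<phi> s. \<phi> j s * psi p v b j)"
    by (rule sigval_eq_sum_supp) (fact assms(3))
  also have "\<dots> \<le> (\<Sum>j\<in>supp m \<phi> s. \<phi> j s * rev_item n prio p v j)"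
  proof (rule sum_mono, rule mult_left_mono)
    fix j assume j: "j \<in> supp m \<phi> s"
    then show "0 \<le> \<phi> j s" by (simp add: supp_def)
    from j have "b \<noteq> w1_item n prio p v j" using assms(5) by blast
    then show "psi p v b j \<le> rev_item n prio p v j"
      by (rule psi_le_rev_item[OF assms(1,2,4)])
  qed
  finally show ?thesis .
qed

theorem claim2:
  fixes n m :: nat and p :: "nat \<Rightarrow> real" and v :: "nat \<Rightarrow> nat \<Rightarrow> real"
    and prio :: "nat \<Rightarrow> nat" and Sig :: "nat set" and \<phi> :: "nat \<Rightarrow> nat \<Rightarrow> real" and S :: nat
  assumes "n \<ge> 2"
    and "\<forall>j<m. 0 \<le> p j" and "(\<Sum>j<m. p j) = 1"
    and "\<forall>i<n. \<forall>j<m. 0 \<le> v i j"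
    and "inj_on prio {..<n}"
    and "optimal n m prio p v Sig \<phi>"
    and "S \<in> Sig"
    and "rev_sig n m prio p v \<phi> S > (\<Sum>j\<in>supp m \<phi> S. \<phi> j S * rev_item n prio p v j)"
  shows "w1 n m prio p v \<phi> S \<in> w1_item n prio p v ` supp m \<phi> S
       \<and> w2 n m prio p v \<phi> S \<in> w1_item n prio p v ` supp m \<phi> S"
proof -
  let ?val = "sigval m p v \<phi> S" and ?w1 = "w1 n m prio p v \<phi> S" and ?w2 = "w2 n m prio p v \<phi> S"
  let ?single = "\<Sum>j\<in>supp m \<phi> S. \<phi> j S * rev_item n prio p v j"
  have nonneg: "\<And>j. j < m \<Longrightarrow> 0 \<le> \<phi> j S"
    using assms(6,7) by (simp add: optimal_def scheme_def)
  have bidders: "finite {..<n}" "card {..<n} \<ge> 2" using assms(1) by simp_all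
  have w2: "?w2 < n"
    using top_second_max(1)[OF bidders assms(5), where f = ?val]
    unfolding w1_def w2_def by simp
  have w1: "?w1 < n" and w2_le_w1: "?val ?w2 \<le> ?val ?w1"
    using top_in_and_max[where A = "{..<n}" and f = ?val and prio = prio] w2 assms(5)
    unfolding w1_def by auto
  have "?single < ?val ?w2"
    using assms(8) by (simp add: rev_sig_def sigval_def mult.commute)
  moreover have "?val b \<le> ?single" if "b < n" "b \<notin> w1_item n prio p v ` supp m \<phi> S" for b
    using sigval_le_singleton_revenue[OF assms(1,5) nonneg that] .
  ultimately show ?thesis using w1 w2 w2_le_w1 by (meson not_le order.trans)
qed

end
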